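(* Let the standing assumptions hold, let $\alpha>0$ and $p\in(0,1]$, and let $(\bm{x}^\star,\bm{w}^\star,\bm{u}_b^\star)$ satisfy $$\bm{w}^\star=\bm{x}^\star-\alpha\nabla F(\bm{x}^\star),\quad \bm{x}^\star=\mathrm{prox}_{\alpha R}\big(\bm{A}(\bm{w}^\star-\sqrt{\bm{B}}\bm{u}_b^\star)\big),\quad \bm{0}=\sqrt{\bm{B}}\big(\bm{w}^\star-\sqrt{\bm{B}}\bm{u}_b^\star\big),$$ with $\bm{u}_b^\star\in\mathrm{range}(\sqrt{\bm{B}})$. Then the iterates of the algorithm below satisfy, for every $k\ge 0$, $$\mathbb{E}\Big[\|\bm{x}^{k+1}-\bm{x}^\star\|^2+\tfrac{1}{p^2}\|\bm{u}^{k+1}-\bm{u}_b^\star\|^2\,\Big|\,\mathcal{F}_k\Big]\le \|\bm{w}^k-\bm{w}^\star\|^2+\big(1-p^2\sigma_m(\bm{B})\big)\tfrac{1}{p^2}\|\bm{u}^k-\bm{u}_b^\star\|^2,$$ where $\mathcal{F}_k$ is the $\sigma$-algebra generated by $\theta_0,\dots,\theta_{k-1}$ (the expectation is over $\theta_k$).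
   Context: Standing assumptions: $f_1,\dots,f_n:\mathbb{R}^d\to\mathbb{R}$ are $\mu$-strongly convex with $\mu\ge0$ and $L$-smooth ($L>0$); $r:\mathbb{R}^d\to\mathbb{R}\cup\{\infty\}$ is proper, closed, convex. For $\bm{x}=\mathrm{col}\{x_1,\dots,x_n\}\in\mathbb{R}^{nd}$, $F(\bm{x})=\sum_i f_i(x_i)$, $R(\bm{x})=\sum_i r(x_i)$, $\mathrm{prox}_{\alpha r}(x)=\arg\min_s\{r(s)+\frac1{2\alpha}\|s-x\|^2\}$ and $\mathrm{prox}_{\alpha R}$ acts blockwise. $W\in\mathbb{R}^{n\times n}$ is symmetric, $W\bm1=\bm1$, $W_{ij}>0$ on edges of an undirected connected graph and $W_{ij}=0$ for non-adjacent $i\ne j$. $A,B$ are polynomials in $W$ with $A^{\sf T}=A$, $A\bm1=\bm1$, $B\succeq0$, $\mathrm{null}(B)=\mathrm{span}(\bm1)$, $I-A^2-B\succeq0$; $\bm A=A\otimes I_d$, $\bm B=B\otimes I_d$, $\sqrt{\bm B}=\sqrt B\otimes I_d$ (PSD square root); $\sigma_m(\bm B)$ is the smallest nonzero singular value of $\bm B$. Algorithm (FlexATC, equivalent form): $\theta_0,\theta_1,\dots$ are i.i.d. in $\{0,1\}$ with $\mathrm{Prob}(\theta_k=1)=p$; $\bm{A}_k=\theta_k\bm{A}+(1-\theta_k)\bm{I}$ and $\sqrt{\bm{B}_k}=\theta_k\sqrt{\bm B}$. Given $\bm{x}^0\in\mathbb{R}^{nd}$ and $\bm{u}^0=\bm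 0$, for $k\ge0$: $\bm{w}^k=\bm{x}^k-\alpha\nabla F(\bm{x}^k)$, $\bm{x}^{k+1}=\mathrm{prox}_{\alpha R}\big(\bm{A}_k(\bm{w}^k-\sqrt{\bm B}\bm{u}^k)\big)$, $\bm{u}^{k+1}=\bm{u}^k+p\sqrt{\bm B_k}(\bm w^k-\sqrt{\bm B}\bm u^k)$. *)

theory Defs
  imports "HOL-Analysis.Analysis" "HOL-Probability.Probability"
          "HOL-Computational_Algebra.Polynomial"
begin

text \<open>Stacked vectors bold x = col(x_1,...,x_n) in R^{nd} are represented as
  elements of real^'d^'n (row i is x_i). Then (A \<otimes> I_d) x is exactly the
  matrix product A ** x, and the Euclidean norm of the stacked vector is norm x.\<close>

primrec mat_pow :: "real^'n^'n \<Rightarrow> nat \<Rightarrow> real^'n^'n" where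
  "mat_pow W 0 = mat 1"
| "mat_pow W (Suc k) = W ** mat_pow W k"

definition poly_mat :: "real poly \<Rightarrow> real^'n^'n \<Rightarrow> real^'n^'n" where
  "poly_mat q W = (\<Sum>i\<le>degree q. coeff q i *\<^sub>R mat_pow W i)"

definition is_poly_in :: "real^'n^'n \<Rightarrow> real^'n^'n \<Rightarrow> bool" where
  "is_poly_in A W \<longleftrightarrow> (\<exists>q. A = poly_mat q W)"

definition psd :: "real^'n^'n \<Rightarrow> bool" where
  "psd M \<longleftrightarrow> transpose M = M \<and> (\<forall>v. 0 \<le> v \<bullet> (M *v v))"

definition ones :: "real^'n" where "ones = (\<chi> i. 1)"

definition psd_sqrt :: "real^'n^'n \<Rightarrow> real^'n^'n" where
  "psd_sqrt M = (THE S. psd S \<and> S ** S = M)"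

definition real_eigenvalue :: "real^'n^'n \<Rightarrow> real \<Rightarrow> bool" where
  "real_eigenvalue M l \<longleftrightarrow> (\<exists>v. v \<noteq> 0 \<and> M *v v = l *\<^sub>R v)"

definition singular_values :: "real^'n^'n \<Rightarrow> real set" where
  "singular_values M = {sqrt l | l. real_eigenvalue (transpose M ** M) l}"

definition sigma_min_nz :: "real^'n^'n \<Rightarrow> real" where
  "sigma_min_nz M = Min {s \<in> singular_values M. s \<noteq> 0}"

definition mixing_matrix :: "real^'n^'n \<Rightarrow> bool" where
  "mixing_matrix W \<longleftrightarrow> transpose W = W \<and> W *v ones = ones \<and>
     (\<exists>E :: 'n \<Rightarrow> 'n \<Rightarrow> bool.
        (\<forall>i j. E i j \<longrightarrow> E j i) \<and> (\<forall>i. \<not> E i i) \<and>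
        (\<forall>i j. E\<^sup>*\<^sup>* i j) \<and>
        (\<forall>i j. E i j \<longrightarrow> W $ i $ j > 0) \<and>
        (\<forall>i j. i \<noteq> j \<longrightarrow> \<not> E i j \<longrightarrow> W $ i $ j = 0))"

definition strongly_convex :: "real \<Rightarrow> (real^'d \<Rightarrow> real) \<Rightarrow> bool" where
  "strongly_convex \<mu> f \<longleftrightarrow> convex_on UNIV (\<lambda>x. f x - (\<mu>/2) * (norm x)\<^sup>2)"

definition is_gradient :: "(real^'d \<Rightarrow> real) \<Rightarrow> (real^'d \<Rightarrow> real^'d) \<Rightarrow> bool" where
  "is_gradient f g \<longleftrightarrow> (\<forall>x. (f has_derivative (\<lambda>h. g x \<bullet> h)) (at x))"

definition L_smooth :: "real \<Rightarrow> (real^'d \<Rightarrow> real^'d) \<Rightarrow> bool" where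
  "L_smooth L g \<longleftrightarrow> (\<forall>x y. norm (g x - g y) \<le> L * norm (x - y))"

definition proper_closed_convex :: "(real^'d \<Rightarrow> ereal) \<Rightarrow> bool" where
  "proper_closed_convex r \<longleftrightarrow>
     (\<forall>x. r x \<noteq> -\<infinity>) \<and> (\<exists>x. r x \<noteq> \<infinity>) \<and>
     closed {(x, t::real). r x \<le> ereal t} \<and>
     (\<forall>x y t. 0 \<le> t \<and> t \<le> 1 \<longrightarrow>
        r ((1 - t) *\<^sub>R x + t *\<^sub>R y) \<le> ereal (1 - t) * r x + ereal t * r y)"

definition prox :: "real \<Rightarrow> (real^'d \<Rightarrow> ereal) \<Rightarrow> real^'d \<Rightarrow> real^'d" where
  "prox \<alpha> r x = (THE s. \<forall>z. r s + ereal (1/(2*\<alpha>) * (norm (s - x))\<^sup>2)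
                              \<le> r z + ereal (1/(2*\<alpha>) * (norm (z - x))\<^sup>2))"

definition gradF :: "('n \<Rightarrow> real^'d \<Rightarrow> real^'d) \<Rightarrow> real^'d^'n \<Rightarrow> real^'d^'n" where
  "gradF g x = (\<chi> i. g i (x $ i))"

definition proxR :: "real \<Rightarrow> (real^'d \<Rightarrow> ereal) \<Rightarrow> real^'d^'n \<Rightarrow> real^'d^'n" where
  "proxR \<alpha> r x = (\<chi> i. prox \<alpha> r (x $ i))"

section \<open>FlexATC (equivalent form)\<close>

definition flex_step ::
  "real \<Rightarrow> real \<Rightarrow> real^'n^'n \<Rightarrow> real^'n^'n \<Rightarrow> ('n \<Rightarrow> real^'d \<Rightarrow> real^'d)
   \<Rightarrow> (real^'d \<Rightarrow> ereal) \<Rightarrow> bool \<Rightarrow> (real^'d^'n) \<times> (real^'d^'n) \<Rightarrow> (real^'d^'n) \<times> (real^'d^'n)" where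
  "flex_step \<alpha> p A B g r th xu =
     (let x = fst xu; u = snd xu;
          w = x - \<alpha> *\<^sub>R gradF g x;
          y = w - psd_sqrt B ** u;
          Ak = (if th then A else mat 1);
          sBk = (if th then psd_sqrt B else 0)
      in (proxR \<alpha> r (Ak ** y), u + p *\<^sub>R (sBk ** y)))"

primrec flex_iter ::
  "real \<Rightarrow> real \<Rightarrow> real^'n^'n \<Rightarrow> real^'n^'n \<Rightarrow> ('n \<Rightarrow> real^'d \<Rightarrow> real^'d)
   \<Rightarrow> (real^'d \<Rightarrow> ereal) \<Rightarrow> real^'d^'n \<Rightarrow> (nat \<Rightarrow> bool) \<Rightarrow> nat \<Rightarrow> (real^'d^'n) \<times> (real^'d^'n)" where
  "flex_iter \<alpha> p A B g r x0 th 0 = (x0, 0)"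
| "flex_iter \<alpha> p A B g r x0 th (Suc k) =
     flex_step \<alpha> p A B g r (th k) (flex_iter \<alpha> p A B g r x0 th k)"

definition coin_filtration :: "'w measure \<Rightarrow> (nat \<Rightarrow> 'w \<Rightarrow> bool) \<Rightarrow> nat \<Rightarrow> 'w measure" where
  "coin_filtration M \<theta> k =
     sigma (space M) (\<Union>i\<in>{..<k}. {\<theta> i -` A \<inter> space M | A. A \<subseteq> (UNIV :: bool set)})"

end

theory Submission
  imports Defs
begin

text \<open>Since theta_k is independent of F_k, the conditional expectation is the p-weighted
  average of the Lyapunov function over the two branches of the step. Let
  e = (w^k - sqrt B u^k) - (w^* - sqrt B u_b^*) and d = u^k - u_b^*. Nonexpansiveness of the prox
  bounds the communicating branch by |A e|^2 + |d + p sqrt B e|^2 / p^2 and the idle branch by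
  |e|^2 + |d|^2 / p^2, and I - A^2 - B >= 0 merges the average into
  |e|^2 + |d|^2 / p^2 + 2 <sqrt B d, e> = |w^k - w^*|^2 - |sqrt B d|^2 + |d|^2 / p^2.
  As d lies in the range of sqrt B, |sqrt B d|^2 >= sigma_m(B) |d|^2.\<close>

lemma quadratic_le_imp_bounded:
  fixes \<rho> c a K :: real
  assumes "0 \<le> \<rho>" "0 < c" "0 \<le> a" "c * \<rho>\<^sup>2 - a * \<rho> \<le> K"
  shows "\<rho> \<le> max 1 ((\<bar>K\<bar> + a) / c)"
proof (rule ccontr)
  assume "\<not> ?thesis"
  then have "1 < \<rho>" "(\<bar>K\<bar> + a) / c < \<rho>" by auto
  then have "1 < \<rho>" "\<bar>K\<bar> + a < c * \<rho>" using assms by (auto simp: pos_divide_less_eq mult.commute)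
  then have "\<bar>K\<bar> < \<rho> * (c * \<rho> - a)"
    by (smt (verit, best) mult_less_cancel_right1)
  with assms(4) show False by (simp add: power2_eq_square algebra_simps)
qed

lemma nonpos_if_le_small_multiples:
  fixes D K :: real
  assumes "\<And>t. 0 < t \<Longrightarrow> t \<le> 1 \<Longrightarrow> D \<le> t * K"
  shows "D \<le> 0"
proof (rule ccontr)
  assume "\<not> D \<le> 0"
  define t where "t = min 1 (D / (\<bar>K\<bar> + 1))"
  have t: "0 < t" "t \<le> 1" using \<open>\<not> D \<le> 0\<close> by (auto simp: t_def)
  have "t * (\<bar>K\<bar> + 1) \<le> D / (\<bar>K\<bar> + 1) * (\<bar>K\<bar> + 1)"
    by (intro mult_right_mono) (auto simp: t_def)
  then have "t * (\<bar>K\<bar> + 1) \<le> D" by simp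
  have "D \<le> t * \<bar>K\<bar>" using assms[OF t(1,2)] t(1) by (smt (verit) mult_left_mono abs_ge_self)
  with \<open>t * (\<bar>K\<bar> + 1) \<le> D\<close> t show False by (simp add: algebra_simps)
qed

lemma eq_0_if_linear_le_quadratic:
  fixes a K :: real
  assumes le: "\<And>t. 2 * t * a \<le> t\<^sup>2 * K"
  shows "a = 0"
proof -
  have "2 * a \<le> 0"
  proof (rule nonpos_if_le_small_multiples[of _ K])
    fix t :: real assume "0 < t"
    with le[of t] have "t * (2 * a) \<le> t * (t * K)" by (simp add: power2_eq_square algebra_simps)
    with \<open>0 < t\<close> show "2 * a \<le> t * K" by simp
  qed
  moreover have "- 2 * a \<le> 0"
  proof (rule nonpos_if_le_small_multiples[of _ K])
    fix t :: real assume "0 < t"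
    with le[of "- t"] have "t * (- 2 * a) \<le> t * (t * K)"
      by (simp add: power2_eq_square algebra_simps)
    with \<open>0 < t\<close> show "- 2 * a \<le> t * K" by (metis mult_le_cancel_left_pos)
  qed
  ultimately show ?thesis by simp
qed

section \<open>The proximal operator\<close>

lemma proper_closed_convex_not_MInf:
  "proper_closed_convex r \<Longrightarrow> r x \<noteq> -\<infinity>"
  unfolding proper_closed_convex_def by blast

lemma proper_closed_convex_finite_point:
  assumes "proper_closed_convex r"
  obtains x v where "r x = ereal v"
proof -
  obtain x where "r x \<noteq> \<infinity>" using assms unfolding proper_closed_convex_def by blast
  with proper_closed_convex_not_MInf[OF assms, of x] that show thesis by (cases "r x") auto
qed

lemma proper_closed_convex_convex_ineq:
  assumes "proper_closed_convex r" "0 \<le> t" "t \<le> 1"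
  shows "r ((1 - t) *\<^sub>R x + t *\<^sub>R y) \<le> ereal (1 - t) * r x + ereal t * r y"
  using assms unfolding proper_closed_convex_def by blast

lemma proper_closed_convex_epigraph:
  fixes r :: "real^'d \<Rightarrow> ereal"
  assumes r: "proper_closed_convex r"
  shows "closed {(x, t::real). r x \<le> ereal t}" and "convex {(x, t::real). r x \<le> ereal t}"
proof -
  show "closed {(x, t::real). r x \<le> ereal t}" using r unfolding proper_closed_convex_def by blast
  define E where "E = {(x, t::real). r x \<le> ereal t}"
  show "convex {(x, t::real). r x \<le> ereal t}"
    unfolding convex_def E_def[symmetric]
  proof clarify
    fix x1 t1 x2 t2 and u v :: real
    assume h: "(x1, t1) \<in> E" "(x2, t2) \<in> E" "0 \<le> u" "0 \<le> v" "u + v = 1"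
    then have u: "u = 1 - v" by simp
    have "r ((1 - v) *\<^sub>R x1 + v *\<^sub>R x2) \<le> ereal (1 - v) * r x1 + ereal v * r x2"
      using h by (intro proper_closed_convex_convex_ineq[OF r]) auto
    also have "\<dots> \<le> ereal (1 - v) * ereal t1 + ereal v * ereal t2"
      using h u by (intro add_mono ereal_mult_left_mono) (auto simp: E_def)
    finally show "u *\<^sub>R (x1, t1) + v *\<^sub>R (x2, t2) \<in> E"
      using u by (simp add: E_def)
  qed
qed

text \<open>Separate a point strictly below the graph from the closed convex epigraph.\<close>
lemma proper_closed_convex_affine_minorant:
  fixes r :: "real^'d \<Rightarrow> ereal"
  assumes r: "proper_closed_convex r"
  obtains a b where "\<And>z. ereal (a \<bullet> z + b) \<le> r z"
proof -
  define E where "E = {(x, t::real). r x \<le> ereal t}"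
  obtain x0 v0 where v0: "r x0 = ereal v0" using proper_closed_convex_finite_point[OF r] .
  have "(x0, v0 - 1) \<notin> E" using v0 by (simp add: E_def)
  then obtain a b where ab: "a \<bullet> (x0, v0 - 1) < b" "\<forall>y\<in>E. b < a \<bullet> y"
    using separating_hyperplane_closed_point proper_closed_convex_epigraph[OF r]
    unfolding E_def by blast
  obtain a1 a2 where a: "a = (a1, a2)" by (cases a)
  have "(x0, v0) \<in> E" using v0 by (simp add: E_def)
  with ab a have a2: "0 < a2" by (force simp: algebra_simps)
  have "ereal ((- a1 /\<^sub>R a2) \<bullet> z + b / a2) \<le> r z" for z
  proof (cases "r z")
    case (real t)
    then have "b < a1 \<bullet> z + a2 * t" using ab a by (force simp: E_def)
    then have "b / a2 - a1 \<bullet> z / a2 < t" using a2 by (simp add: field_simps)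
    then show ?thesis using real by (simp add: divide_inverse mult.commute)
  qed (use proper_closed_convex_not_MInf[OF r] in auto)
  then show thesis by (rule that)
qed

definition prox_minimizer :: "real \<Rightarrow> (real^'d \<Rightarrow> ereal) \<Rightarrow> real^'d \<Rightarrow> real^'d \<Rightarrow> bool" where
  "prox_minimizer c r x s \<longleftrightarrow>
     (\<forall>z. r s + ereal (c * (norm (s - x))\<^sup>2) \<le> r z + ereal (c * (norm (z - x))\<^sup>2))"

lemma prox_sublevel_compact:
  fixes r :: "real^'d \<Rightarrow> ereal"
  assumes r: "proper_closed_convex r" and c: "0 < c"
  shows "compact {(z, t). r z \<le> ereal t \<and> t + c * (norm (z - x))\<^sup>2 \<le> V}"
    (is "compact ?P")
proof -
  obtain a b where ab: "\<And>z. ereal (a \<bullet> z + b) \<le> r z"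
    using proper_closed_convex_affine_minorant[OF r] by blast
  define R where "R = max 1 ((\<bar>V - b + norm a * norm x\<bar> + norm a) / c)"
  define lo where "lo = b - norm a * (R + norm x)"
  have sub: "?P \<subseteq> cball x R \<times> {lo..V}"
  proof clarify
    fix z t assume rz: "r z \<le> ereal t" and tV: "t + c * (norm (z - x))\<^sup>2 \<le> V"
    have "ereal (a \<bullet> z + b) \<le> ereal t" using ab[of z] rz by (rule order_trans)
    then have zt: "a \<bullet> z + b \<le> t" "t + c * (norm (z - x))\<^sup>2 \<le> V" using tV by simp_all
    have "a \<bullet> z = a \<bullet> (z - x) + a \<bullet> x" by (simp add: inner_diff_right)
    then have "- (norm a * norm (z - x)) - norm a * norm x \<le> a \<bullet> z"
      using Cauchy_Schwarz_ineq2[of a "z - x"] Cauchy_Schwarz_ineq2[of a x] by linarith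
    then have "c * (norm (z - x))\<^sup>2 - norm a * norm (z - x) \<le> V - b + norm a * norm x"
      using zt by linarith
    from quadratic_le_imp_bounded[OF _ c _ this] have d: "norm (z - x) \<le> R"
      unfolding R_def by simp
    then have "norm a * norm z \<le> norm a * (R + norm x)"
      using norm_triangle_sub[of z x] by (intro mult_left_mono) auto
    then have "lo \<le> t" using zt(1) Cauchy_Schwarz_ineq2[of a z] unfolding lo_def by linarith
    moreover have "0 \<le> c * (norm (z - x))\<^sup>2" using c by simp
    then have "t \<le> V" using zt(2) by linarith
    ultimately show "z \<in> cball x R \<and> t \<in> {lo..V}"
      using d by (simp add: dist_norm norm_minus_commute)
  qed
  have closed: "closed ?P"
  proof -
    define h where "h = (\<lambda>(z, t). t + c * (norm (z - x))\<^sup>2)"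
    have "continuous_on UNIV h" unfolding h_def case_prod_beta by (intro continuous_intros)
    then have "closed ({(z, t). r z \<le> ereal t} \<inter> {q. h q \<le> V})"
      by (intro closed_Int proper_closed_convex_epigraph(1)[OF r] closed_Collect_le
          continuous_on_const)
    moreover have "?P = {(z, t). r z \<le> ereal t} \<inter> {q. h q \<le> V}" by (auto simp: h_def)
    ultimately show ?thesis by simp
  qed
  from compact_Int_closed[OF compact_Times[OF compact_cball[of x R] compact_Icc[of lo V]] closed]
  show ?thesis using sub by (simp add: Int_absorb1)
qed

lemma prox_minimizer_exists:
  fixes r :: "real^'d \<Rightarrow> ereal"
  assumes r: "proper_closed_convex r" and c: "0 < c"
  obtains s where "prox_minimizer c r x s"
proof -
  obtain x0 v0 where v0: "r x0 = ereal v0" using proper_closed_convex_finite_point[OF r] .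
  define h where "h = (\<lambda>(z, t). t + c * (norm (z - x))\<^sup>2)"
  define P where "P = {(z, t). r z \<le> ereal t \<and> t + c * (norm (z - x))\<^sup>2 \<le> h (x0, v0)}"
  have "compact P" unfolding P_def by (rule prox_sublevel_compact[OF r c])
  moreover have "(x0, v0) \<in> P" using v0 by (simp add: P_def h_def)
  then have "P \<noteq> {}" by blast
  moreover have "continuous_on P h" unfolding h_def case_prod_beta by (intro continuous_intros)
  ultimately obtain q where qP: "q \<in> P" and q_min: "\<And>y. y \<in> P \<Longrightarrow> h q \<le> h y"
    by (blast dest: continuous_attains_inf)
  obtain s t where q: "q = (s, t)" by (cases q)
  have qs: "r s \<le> ereal t" "h q \<le> h (x0, v0)" using qP by (simp_all add: P_def q h_def)
  have "r s + ereal (c * (norm (s - x))\<^sup>2) \<le> r z + ereal (c * (norm (z - x))\<^sup>2)" for z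
  proof -
    have "r s + ereal (c * (norm (s - x))\<^sup>2) \<le> ereal t + ereal (c * (norm (s - x))\<^sup>2)"
      using qs(1) by (rule add_right_mono)
    also have "\<dots> = ereal (h q)" by (simp add: h_def q)
    also have "\<dots> \<le> r z + ereal (c * (norm (z - x))\<^sup>2)"
    proof (cases "r z")
      case (real v)
      have "h q \<le> h (z, v)"
      proof (cases "h (z, v) \<le> h (x0, v0)")
        case True
        then show ?thesis using real by (intro q_min) (simp add: P_def h_def)
      qed (use qs(2) in simp)
      then show ?thesis using real by (simp add: h_def)
    qed (use proper_closed_convex_not_MInf[OF r] in auto)
    finally show ?thesis .
  qed
  then have "prox_minimizer c r x s" unfolding prox_minimizer_def by blast
  then show thesis by (rule that)
qed

lemma prox_minimizer_finite:
  assumes r: "proper_closed_convex r" and s: "prox_minimizer c r x s"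
  obtains v where "r s = ereal v"
proof -
  obtain x0 v0 where v0: "r x0 = ereal v0" using proper_closed_convex_finite_point[OF r] .
  have "r s + ereal (c * (norm (s - x))\<^sup>2) \<le> ereal v0 + ereal (c * (norm (x0 - x))\<^sup>2)"
    using s v0 unfolding prox_minimizer_def by metis
  then have "r s \<noteq> \<infinity>" by auto
  with proper_closed_convex_not_MInf[OF r, of s] that show thesis by (cases "r s") auto
qed

lemma prox_minimizer_unique:
  assumes r: "proper_closed_convex r" and c: "0 < c"
    and s1: "prox_minimizer c r x s1" and s2: "prox_minimizer c r x s2"
  shows "s1 = s2"
proof -
  obtain v1 where v1: "r s1 = ereal v1" using prox_minimizer_finite[OF r s1] .
  obtain v2 where v2: "r s2 = ereal v2" using prox_minimizer_finite[OF r s2] .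
  define m where "m = (1 - 1/2) *\<^sub>R s1 + (1/2::real) *\<^sub>R s2"
  have min12: "v1 + c * (norm (s1 - x))\<^sup>2 \<le> v2 + c * (norm (s2 - x))\<^sup>2"
    using s1 v1 v2 unfolding prox_minimizer_def by (metis ereal_less_eq(3) plus_ereal.simps(1))
  have min21: "v2 + c * (norm (s2 - x))\<^sup>2 \<le> v1 + c * (norm (s1 - x))\<^sup>2"
    using s2 v1 v2 unfolding prox_minimizer_def by (metis ereal_less_eq(3) plus_ereal.simps(1))
  have "ereal (v1 + c * (norm (s1 - x))\<^sup>2) \<le> r m + ereal (c * (norm (m - x))\<^sup>2)"
    using s1 v1 unfolding prox_minimizer_def by (metis plus_ereal.simps(1))
  also have "\<dots> \<le> ereal (v1/2 + v2/2) + ereal (c * (norm (m - x))\<^sup>2)"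
    using proper_closed_convex_convex_ineq[OF r, of "1/2" s1 s2] v1 v2
    unfolding m_def by (intro add_right_mono) simp
  finally have min_m: "v1 + c * (norm (s1 - x))\<^sup>2 \<le> v1/2 + v2/2 + c * (norm (m - x))\<^sup>2" by simp
  have parallelogram: "(norm (m - x))\<^sup>2
      = ((norm (s1 - x))\<^sup>2 + (norm (s2 - x))\<^sup>2) / 2 - (norm (s1 - s2))\<^sup>2 / 4"
    unfolding m_def power2_norm_eq_inner
    by (simp add: inner_add_left inner_add_right inner_diff_left inner_diff_right inner_commute
        field_simps)
  have "c * (norm (m - x))\<^sup>2
      = c * (norm (s1 - x))\<^sup>2 / 2 + c * (norm (s2 - x))\<^sup>2 / 2 - c * (norm (s1 - s2))\<^sup>2 / 4"
    unfolding parallelogram by (simp add: algebra_simps)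
  then have "c * (norm (s1 - s2))\<^sup>2 \<le> 0"
    using min12 min21 min_m by linarith
  then show ?thesis using c by (simp add: mult_le_0_iff)
qed

lemma prox_is_minimizer:
  assumes r: "proper_closed_convex r" and \<alpha>: "0 < \<alpha>"
  shows "prox_minimizer (1 / (2 * \<alpha>)) r x (prox \<alpha> r x)"
proof -
  have c: "0 < 1 / (2 * \<alpha>)" using \<alpha> by simp
  obtain s where "prox_minimizer (1 / (2 * \<alpha>)) r x s" using prox_minimizer_exists[OF r c] .
  then have "\<exists>!s. prox_minimizer (1 / (2 * \<alpha>)) r x s"
    using prox_minimizer_unique[OF r c] by blast
  then show ?thesis
    unfolding prox_def prox_minimizer_def[symmetric] by (rule theI')
qed

text \<open>First-order optimality of a minimizer s, tested along the segment from s to z.\<close>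
lemma prox_minimizer_variational_ineq:
  assumes r: "proper_closed_convex r" and c: "0 < c" and s: "prox_minimizer c r x s"
    and vs: "r s = ereal vs" and vz: "r z = ereal vz"
  shows "2 * c * ((x - s) \<bullet> (z - s)) \<le> vz - vs"
proof -
  define d where "d = z - s"
  have "2 * c * ((x - s) \<bullet> d) - (vz - vs) \<le> t * (c * (norm d)\<^sup>2)" if t: "0 < t" "t \<le> 1" for t
  proof -
    define zt where "zt = (1 - t) *\<^sub>R s + t *\<^sub>R z"
    have "ereal (vs + c * (norm (s - x))\<^sup>2) \<le> r zt + ereal (c * (norm (zt - x))\<^sup>2)"
      using s vs unfolding prox_minimizer_def by (metis plus_ereal.simps(1))
    also have "\<dots> \<le> ereal ((1 - t) * vs + t * vz) + ereal (c * (norm (zt - x))\<^sup>2)"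
      using proper_closed_convex_convex_ineq[OF r, of t s z] t vs vz
      unfolding zt_def by (intro add_right_mono) simp
    finally have "vs + c * (norm (s - x))\<^sup>2 \<le> (1 - t) * vs + t * vz + c * (norm (zt - x))\<^sup>2"
      by simp
    moreover have "(norm (zt - x))\<^sup>2 = (norm (s - x))\<^sup>2 + 2 * t * ((s - x) \<bullet> d) + t\<^sup>2 * (norm d)\<^sup>2"
      unfolding zt_def d_def power2_norm_eq_inner
      by (simp add: algebra_simps inner_add_left inner_add_right inner_diff_left inner_diff_right
          inner_commute power2_eq_square)
    ultimately have "t * vs \<le> t * vz + 2 * t * c * ((s - x) \<bullet> d) + t\<^sup>2 * c * (norm d)\<^sup>2"
      by (simp add: algebra_simps)
    moreover have "(s - x) \<bullet> d = - ((x - s) \<bullet> d)" by (simp add: inner_diff_left)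
    ultimately have "t * (2 * c * ((x - s) \<bullet> d) - (vz - vs)) \<le> t * (t * (c * (norm d)\<^sup>2))"
      by (simp add: algebra_simps power2_eq_square)
    then show ?thesis using t by simp
  qed
  then have "2 * c * ((x - s) \<bullet> d) - (vz - vs) \<le> 0" by (rule nonpos_if_le_small_multiples)
  then show ?thesis unfolding d_def by simp
qed

lemma prox_minimizer_nonexpansive:
  assumes r: "proper_closed_convex r" and c: "0 < c"
    and s: "prox_minimizer c r x s" and s': "prox_minimizer c r y s'"
  shows "norm (s - s') \<le> norm (x - y)"
proof -
  obtain v where v: "r s = ereal v" using prox_minimizer_finite[OF r s] .
  obtain v' where v': "r s' = ereal v'" using prox_minimizer_finite[OF r s'] .
  have "2 * c * ((x - s) \<bullet> (s' - s)) + 2 * c * ((y - s') \<bullet> (s - s')) \<le> 0"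
    using prox_minimizer_variational_ineq[OF r c s v v']
      prox_minimizer_variational_ineq[OF r c s' v' v] by linarith
  then have "(x - s) \<bullet> (s' - s) + (y - s') \<bullet> (s - s') \<le> 0"
    using c by (simp add: distrib_left[symmetric] mult_le_0_iff)
  then have "(norm (s - s'))\<^sup>2 \<le> (x - y) \<bullet> (s - s')"
    unfolding power2_norm_eq_inner
    by (simp add: inner_diff_left inner_diff_right inner_commute algebra_simps)
  also have "\<dots> \<le> norm (x - y) * norm (s - s')" by (rule norm_cauchy_schwarz)
  finally show ?thesis
    by (metis mult_le_cancel_right norm_ge_zero power2_eq_square not_le mult_zero_right order.trans)
qed

lemma prox_nonexpansive:
  assumes "proper_closed_convex r" "0 < \<alpha>"
  shows "norm (prox \<alpha> r x - prox \<alpha> r y) \<le> norm (x - y)"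
proof -
  have "0 < 1 / (2 * \<alpha>)" using assms(2) by simp
  then show ?thesis
    using prox_minimizer_nonexpansive prox_is_minimizer assms by blast
qed

section \<open>Symmetric and positive semidefinite matrices\<close>

lemma symmetric_matrix_inner:
  fixes M :: "real^'n^'n"
  assumes "transpose M = M"
  shows "x \<bullet> (M *v y) = (M *v x) \<bullet> y"
  by (metis assms dot_lmul_matrix transpose_matrix_vector)

text \<open>A maximizer of the Rayleigh quotient over the unit sphere of V is an eigenvector.\<close>
lemma symmetric_matrix_invariant_subspace_eigenvector:
  fixes M :: "real^'n^'n"
  assumes sym: "transpose M = M" and V: "subspace V" and inv: "\<And>x. x \<in> V \<Longrightarrow> M *v x \<in> V"
    and "V \<noteq> {0}"
  obtains v l where "v \<in> V" "norm v = 1" "M *v v = l *\<^sub>R v"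
proof -
  define q where "q x = x \<bullet> (M *v x)" for x
  define K where "K = V \<inter> sphere 0 1"
  have "compact K" unfolding K_def
    by (intro closed_Int_compact closed_subspace V compact_sphere)
  obtain y where y: "y \<in> V" "y \<noteq> 0" using \<open>V \<noteq> {0}\<close> V subspace_0 by blast
  then have "y /\<^sub>R norm y \<in> K" using V unfolding K_def by (simp add: subspace_scale)
  moreover have "continuous_on K q" unfolding q_def by (intro continuous_intros)
  ultimately obtain x0 where x0: "x0 \<in> K" and x0_max: "\<And>z. z \<in> K \<Longrightarrow> q z \<le> q x0"
    using continuous_attains_sup[OF \<open>compact K\<close>] by (metis empty_iff)
  have x0V: "x0 \<in> V" and x0_norm: "x0 \<bullet> x0 = 1" using x0 unfolding K_def by (auto simp: norm_eq_1)
  have bound: "q z \<le> q x0 * (norm z)\<^sup>2" if "z \<in> V" for z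
  proof (cases "z = 0")
    case False
    then have "z /\<^sub>R norm z \<in> K" using that V unfolding K_def by (simp add: subspace_scale)
    then have "q (z /\<^sub>R norm z) \<le> q x0" by (rule x0_max)
    then show ?thesis using False
      by (simp add: q_def matrix_vector_mult_scaleR power2_eq_square field_simps)
  qed (simp add: q_def)
  define h where "h = M *v x0 - q x0 *\<^sub>R x0"
  have hV: "h \<in> V" unfolding h_def using V x0V inv by (simp add: subspace_diff subspace_scale)
  have h_orth: "x0 \<bullet> h = 0" unfolding h_def q_def using x0_norm by (simp add: inner_diff_right)
  have "2 * t * ((M *v x0) \<bullet> h) \<le> t\<^sup>2 * (q x0 * (norm h)\<^sup>2 - q h)" for t
  proof -
    have "q (x0 + t *\<^sub>R h) \<le> q x0 * (norm (x0 + t *\<^sub>R h))\<^sup>2"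
      using x0V hV V by (intro bound) (simp add: subspace_add subspace_scale)
    moreover have "(norm (x0 + t *\<^sub>R h))\<^sup>2 = 1 + t\<^sup>2 * (norm h)\<^sup>2"
      using x0_norm h_orth unfolding power2_norm_eq_inner
      by (simp add: inner_add_left inner_add_right inner_commute power2_eq_square)
    moreover have "q (x0 + t *\<^sub>R h) = q x0 + 2 * t * ((M *v x0) \<bullet> h) + t\<^sup>2 * q h"
      using symmetric_matrix_inner[OF sym, of h x0] unfolding q_def
      by (simp add: matrix_vector_right_distrib matrix_vector_mult_scaleR inner_add_left
          inner_add_right inner_commute power2_eq_square algebra_simps)
    ultimately show ?thesis by (simp add: algebra_simps)
  qed
  then have "(M *v x0) \<bullet> h = 0" by (rule eq_0_if_linear_le_quadratic)
  then have "h \<bullet> h = 0" using h_orth unfolding h_def by (simp add: inner_diff_left inner_commute)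
  then have "M *v x0 = q x0 *\<^sub>R x0" unfolding h_def by simp
  with x0V x0_norm show thesis by (intro that) (auto simp: norm_eq_1)
qed

lemma symmetric_matrix_invariant_subspace_eigenbasis:
  fixes M :: "real^'n^'n"
  assumes sym: "transpose M = M" and "subspace V" and "\<And>x. x \<in> V \<Longrightarrow> M *v x \<in> V"
  shows "\<exists>E \<subseteq> V. pairwise orthogonal E \<and> (\<forall>v\<in>E. norm v = 1 \<and> (\<exists>l. M *v v = l *\<^sub>R v)) \<and> span E = V"
  using assms(2,3)
proof (induction "dim V" arbitrary: V rule: less_induct)
  case less
  show ?case
  proof (cases "V = {0}")
    case True
    then show ?thesis by (intro exI[of _ "{}"]) auto
  next
    case False
    obtain v l where v: "v \<in> V" "norm v = 1" "M *v v = l *\<^sub>R v"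
      using symmetric_matrix_invariant_subspace_eigenvector[OF sym less.prems False] .
    define V' where "V' = {x \<in> V. v \<bullet> x = 0}"
    have V': "subspace V'"
      using less.prems(1) unfolding V'_def subspace_def by (auto simp: inner_add_right)
    have inv': "M *v x \<in> V'" if "x \<in> V'" for x
      using that less.prems(2) symmetric_matrix_inner[OF sym, of v x] v(3)
      unfolding V'_def by auto
    have "v \<notin> V'" using v(2) unfolding V'_def by (auto simp: norm_eq_1)
    then have "V' \<subset> V" using v(1) unfolding V'_def by blast
    then have "span V' \<subset> span V" using V' less.prems(1) by (metis span_eq_iff)
    then have "dim V' < dim V" by (rule dim_psubset)
    then obtain E' where E': "E' \<subseteq> V'" "pairwise orthogonal E'"
        "\<forall>v\<in>E'. norm v = 1 \<and> (\<exists>l. M *v v = l *\<^sub>R v)" "span E' = V'"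
      using less.hyps V' inv' by blast
    have "V \<subseteq> span (insert v E')"
    proof
      fix x assume "x \<in> V"
      then have "x - (v \<bullet> x) *\<^sub>R v \<in> V'"
        using v(1,2) less.prems(1) unfolding V'_def
        by (simp add: subspace_diff subspace_scale inner_diff_right norm_eq_1)
      then show "x \<in> span (insert v E')" using E'(4) span_breakdown_eq by blast
    qed
    moreover have "span (insert v E') \<subseteq> V"
      using E'(1) v(1) less.prems(1) unfolding V'_def by (intro span_minimal) auto
    moreover have "orthogonal v y" if "y \<in> E'" for y
      using that E'(1) unfolding V'_def orthogonal_def by auto
    ultimately show ?thesis using E' v V'_def
      by (intro exI[of _ "insert v E'"]) (auto simp: pairwise_insert orthogonal_commute)
  qed
qed

lemma symmetric_matrix_orthonormal_eigenbasis:
  fixes M :: "real^'n^'n"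
  assumes "transpose M = M"
  obtains E and ev :: "real^'n \<Rightarrow> real"
  where "pairwise orthogonal E" "\<And>v. v \<in> E \<Longrightarrow> norm v = 1"
    "\<And>v. v \<in> E \<Longrightarrow> M *v v = ev v *\<^sub>R v" "span E = UNIV"
proof -
  obtain E where "pairwise orthogonal E" "\<forall>v\<in>E. norm v = 1 \<and> (\<exists>l. M *v v = l *\<^sub>R v)"
      "span E = UNIV"
    using symmetric_matrix_invariant_subspace_eigenbasis[OF assms, of UNIV] by auto
  then show thesis using that[of E "\<lambda>v. SOME l. M *v v = l *\<^sub>R v"] by (metis (mono_tags) someI)
qed

lemma orthonormal_basis_expansion:
  fixes E :: "'a::euclidean_space set"
  assumes orth: "pairwise orthogonal E" and unit: "\<And>v. v \<in> E \<Longrightarrow> norm v = 1"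
    and span: "span E = UNIV"
  shows "x = (\<Sum>v\<in>E. (v \<bullet> x) *\<^sub>R v)"
proof -
  have "(\<Sum>v\<in>E. (v \<bullet> x / (v \<bullet> v)) *\<^sub>R v) = (\<Sum>v\<in>E. (v \<bullet> x) *\<^sub>R v)"
    using unit by (intro sum.cong) (auto simp: norm_eq_1)
  moreover have "orthogonal y (x - (\<Sum>v\<in>E. (v \<bullet> x / (v \<bullet> v)) *\<^sub>R v))" for y
    using Gram_Schmidt_step[OF orth] span by blast
  ultimately show ?thesis by (metis orthogonal_self eq_iff_diff_eq_0)
qed

lemma orthonormal_basis_inner:
  fixes E :: "'a::euclidean_space set"
  assumes "pairwise orthogonal E" "\<And>v. v \<in> E \<Longrightarrow> norm v = 1" "span E = UNIV"
  shows "x \<bullet> y = (\<Sum>v\<in>E. (v \<bullet> x) * (v \<bullet> y))"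
proof -
  have "x \<bullet> y = x \<bullet> (\<Sum>v\<in>E. (v \<bullet> y) *\<^sub>R v)"
    using orthonormal_basis_expansion[OF assms] by metis
  then show ?thesis by (simp add: inner_sum_right inner_commute mult.commute)
qed

lemma psd_symmetric: "psd M \<Longrightarrow> transpose M = M"
  unfolding psd_def by simp

lemma psd_nonneg: "psd M \<Longrightarrow> 0 \<le> v \<bullet> (M *v v)"
  unfolding psd_def by simp

lemma psd_eigenvalue_nonneg:
  assumes "psd M" "M *v v = l *\<^sub>R v" "v \<noteq> 0"
  shows "0 \<le> l"
proof -
  have "0 \<le> l * (v \<bullet> v)" using psd_nonneg[OF assms(1), of v] assms(2) by simp
  moreover have "0 < v \<bullet> v" using assms(3) by simp
  ultimately show ?thesis by (simp add: zero_le_mult_iff)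
qed

lemma matrix_vector_mult_sum: "(A::real^'n^'m) *v (\<Sum>v\<in>E. f v) = (\<Sum>v\<in>E. A *v f v)"
  using linear_sum[OF matrix_vector_mul_linear, of A f E] by simp

text \<open>S v - sqrt l v lies in an eigenspace of S for the eigenvalue -sqrt l, which
  positivity of S rules out unless it is zero.\<close>
lemma psd_square_root_on_eigenvector:
  fixes S B :: "real^'n^'n"
  assumes S: "psd S" and SS: "S ** S = B" and v: "B *v v = l *\<^sub>R v"
  shows "S *v v = sqrt l *\<^sub>R v"
proof -
  have SSv: "S *v (S *v x) = B *v x" for x using SS by (simp add: matrix_vector_mul_assoc)
  have norm_Sv: "(S *v v) \<bullet> (S *v v) = l * (v \<bullet> v)"
    using symmetric_matrix_inner[OF psd_symmetric[OF S], of v "S *v v"] SSv[of v] v by simp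
  show ?thesis
  proof (cases "0 < l")
    case False
    then have "(S *v v) \<bullet> (S *v v) \<le> 0" using norm_Sv by (simp add: mult_nonpos_nonneg)
    then have "S *v v = 0" using inner_ge_zero[of "S *v v"]
      by (metis inner_eq_zero_iff order_antisym)
    moreover from this have "l = 0 \<or> v = 0" using norm_Sv by simp
    ultimately show ?thesis by auto
  next
    case True
    define w where "w = S *v v - sqrt l *\<^sub>R v"
    have "S *v w = - sqrt l *\<^sub>R w"
      using True v SSv[of v] unfolding w_def
      by (simp add: matrix_vector_mult_diff_distrib matrix_vector_mult_scaleR algebra_simps)
    then have "0 \<le> - sqrt l * (w \<bullet> w)" using psd_nonneg[OF S, of w] by simp
    then have "w \<bullet> w \<le> 0" using True by (simp add: mult_le_0_iff)
    then have "w = 0" using inner_ge_zero[of w] by (metis inner_eq_zero_iff order_antisym)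
    then show ?thesis unfolding w_def by simp
  qed
qed

lemma psd_square_root_exists:
  fixes B :: "real^'n^'n"
  assumes B: "psd B"
  obtains S where "psd S" "S ** S = B"
proof -
  obtain E ev where orth: "pairwise orthogonal E" and unit: "\<And>v. v \<in> E \<Longrightarrow> norm v = 1"
      and eig: "\<And>v. v \<in> E \<Longrightarrow> B *v v = ev v *\<^sub>R v" and span: "span E = UNIV"
    using symmetric_matrix_orthonormal_eigenbasis[OF psd_symmetric[OF B]] by metis
  have ev_nonneg: "0 \<le> ev v" if "v \<in> E" for v
    using psd_eigenvalue_nonneg[OF B eig[OF that]] unit[OF that] by (metis norm_zero zero_neq_one)
  have orthonormal: "v \<bullet> w = (if v = w then 1 else 0)" if "v \<in> E" "w \<in> E" for v w
    using orth unit that unfolding pairwise_def orthogonal_def by (auto simp: norm_eq_1)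
  define S where "S = (\<chi> i j. \<Sum>v\<in>E. sqrt (ev v) * v$i * v$j)"
  have Sx: "S *v x = (\<Sum>v\<in>E. (sqrt (ev v) * (v \<bullet> x)) *\<^sub>R v)" for x
    unfolding S_def
    by (simp add: vec_eq_iff matrix_vector_mult_def inner_vec_def sum_distrib_left
        sum_distrib_right sum_component sum.swap[of _ E] algebra_simps)
  have Sv: "S *v w = sqrt (ev w) *\<^sub>R w" if "w \<in> E" for w
  proof -
    have "S *v w = (\<Sum>v\<in>E. if v = w then sqrt (ev w) *\<^sub>R w else 0)"
      unfolding Sx by (rule sum.cong) (auto simp: orthonormal that)
    then show ?thesis
      using that pairwise_orthogonal_imp_finite[OF orth] by simp
  qed
  have "psd S"
    unfolding psd_def
  proof
    show "transpose S = S"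
      unfolding S_def by (simp add: transpose_def vec_eq_iff mult.commute mult.left_commute)
    show "\<forall>x. 0 \<le> x \<bullet> (S *v x)"
      unfolding Sx by (simp add: inner_sum_right inner_commute mult.assoc sum_nonneg ev_nonneg)
  qed
  moreover have "S ** S = B"
    unfolding matrix_eq
  proof
    fix x
    have "(S ** S) *v x = (\<Sum>v\<in>E. (sqrt (ev v) * (v \<bullet> x)) *\<^sub>R (S *v v))"
      by (simp add: matrix_vector_mul_assoc[symmetric] Sx matrix_vector_mult_sum
          matrix_vector_mult_scaleR)
    also have "\<dots> = (\<Sum>v\<in>E. (v \<bullet> x) *\<^sub>R (ev v *\<^sub>R v))"
      by (rule sum.cong) (simp_all add: Sv ev_nonneg)
    also have "\<dots> = B *v x"
      using arg_cong[OF orthonormal_basis_expansion[OF orth unit span, of x], of "(*v) B"]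
      by (simp add: matrix_vector_mult_sum matrix_vector_mult_scaleR eig)
    finally show "(S ** S) *v x = B *v x" .
  qed
  ultimately show thesis by (rule that)
qed

text \<open>Both square roots act as sqrt l on every l-eigenvector of B, and these span.\<close>
lemma psd_square_root_unique:
  fixes S S' :: "real^'n^'n"
  assumes S: "psd S" "S ** S = B" and S': "psd S'" "S' ** S' = B"
  shows "S' = S"
proof -
  have "transpose B = B"
    using S psd_symmetric[OF S(1)] by (metis matrix_transpose_mul)
  then obtain E ev where orth: "pairwise orthogonal E" and unit: "\<And>v. v \<in> E \<Longrightarrow> norm v = 1"
      and eig: "\<And>v. v \<in> E \<Longrightarrow> B *v v = ev v *\<^sub>R v" and span: "span E = UNIV"
    using symmetric_matrix_orthonormal_eigenbasis by metis
  have "T *v x = (\<Sum>v\<in>E. (v \<bullet> x) *\<^sub>R (sqrt (ev v) *\<^sub>R v))" if "psd T" "T ** T = B" for T x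
    using arg_cong[OF orthonormal_basis_expansion[OF orth unit span, of x], of "(*v) T"]
    by (simp add: matrix_vector_mult_sum matrix_vector_mult_scaleR
        psd_square_root_on_eigenvector[OF that eig])
  then show ?thesis using S S' by (simp add: matrix_eq)
qed

lemma psd_sqrt:
  fixes B :: "real^'n^'n"
  assumes "psd B"
  shows "psd (psd_sqrt B) \<and> psd_sqrt B ** psd_sqrt B = B"
proof -
  have "\<exists>!S. psd S \<and> S ** S = B"
    using psd_square_root_exists[OF assms] psd_square_root_unique by metis
  then show ?thesis unfolding psd_sqrt_def by (rule theI')
qed

lemma psd_psd_sqrt: "psd B \<Longrightarrow> psd (psd_sqrt B)"
  using psd_sqrt by blast

lemma psd_sqrt_mult_self: "psd B \<Longrightarrow> psd_sqrt B ** psd_sqrt B = B"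
  using psd_sqrt by blast

lemma symmetric_matrix_finite_eigenvalues:
  fixes M :: "real^'n^'n"
  assumes sym: "transpose M = M"
  shows "finite {l. real_eigenvalue M l}"
proof -
  obtain E ev where orth: "pairwise orthogonal E" and unit: "\<And>v. v \<in> E \<Longrightarrow> norm v = 1"
      and eig: "\<And>v. v \<in> E \<Longrightarrow> M *v v = ev v *\<^sub>R v" and span: "span E = UNIV"
    using symmetric_matrix_orthonormal_eigenbasis[OF sym] by metis
  have "{l. real_eigenvalue M l} \<subseteq> ev ` E"
  proof
    fix l assume "l \<in> {l. real_eigenvalue M l}"
    then obtain x where x: "x \<noteq> 0" "M *v x = l *\<^sub>R x" unfolding real_eigenvalue_def by auto
    obtain w where w: "w \<in> E" "w \<bullet> x \<noteq> 0"
      using orthonormal_basis_expansion[OF orth unit span, of x] x(1)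
      by (metis (no_types, lifting) inner_zero_left scale_eq_0_iff sum.neutral)
    have "l * (w \<bullet> x) = ev w * (w \<bullet> x)"
      using symmetric_matrix_inner[OF sym, of w x] x(2) eig[OF w(1)] by simp
    then show "l \<in> ev ` E" using w by simp
  qed
  then show ?thesis
    using finite_subset pairwise_orthogonal_imp_finite[OF orth] by blast
qed

lemma finite_singular_values: "finite (singular_values (M::real^'n^'n))"
proof -
  have "singular_values M = sqrt ` {l. real_eigenvalue (transpose M ** M) l}"
    unfolding singular_values_def by blast
  then show ?thesis
    using symmetric_matrix_finite_eigenvalues[of "transpose M ** M"]
    by (simp add: matrix_transpose_mul)
qed

lemma sigma_min_nz_le_eigenvalue:
  fixes B :: "real^'n^'n"
  assumes B: "psd B" and v: "B *v v = l *\<^sub>R v" "v \<noteq> 0" and "l \<noteq> 0"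
  shows "sigma_min_nz B \<le> l"
proof -
  have "(transpose B ** B) *v v = l\<^sup>2 *\<^sub>R v"
    using v(1) psd_symmetric[OF B]
    by (simp add: matrix_vector_mul_assoc[symmetric] matrix_vector_mult_scaleR power2_eq_square)
  then have "sqrt (l\<^sup>2) \<in> singular_values B"
    using v(2) unfolding singular_values_def real_eigenvalue_def by blast
  moreover have "sqrt (l\<^sup>2) = l" using psd_eigenvalue_nonneg[OF B v] by simp
  ultimately show ?thesis
    unfolding sigma_min_nz_def using \<open>l \<noteq> 0\<close>
    by (intro Min_le finite_subset[OF _ finite_singular_values[of B]]) auto
qed

text \<open>t = sqrt B z has no component along the kernel of B, and every other eigenvalue of B is
  at least sigma_min_nz B.\<close>
lemma sigma_min_nz_le_psd_sqrt:
  fixes B :: "real^'n^'n"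
  assumes B: "psd B" and t: "t \<in> range ((*v) (psd_sqrt B))"
  shows "sigma_min_nz B * (norm t)\<^sup>2 \<le> (norm (psd_sqrt B *v t))\<^sup>2"
proof -
  define S where "S = psd_sqrt B"
  obtain z where z: "t = S *v z" using t unfolding S_def by blast
  obtain E ev where orth: "pairwise orthogonal E" and unit: "\<And>v. v \<in> E \<Longrightarrow> norm v = 1"
      and eig: "\<And>v. v \<in> E \<Longrightarrow> B *v v = ev v *\<^sub>R v" and span: "span E = UNIV"
    using symmetric_matrix_orthonormal_eigenbasis[OF psd_symmetric[OF B]] by metis
  have v0: "v \<noteq> 0" if "v \<in> E" for v using unit[OF that] by auto
  have S_coord: "v \<bullet> (S *v y) = sqrt (ev v) * (v \<bullet> y)" if "v \<in> E" for v y
    using symmetric_matrix_inner[OF psd_symmetric[OF psd_psd_sqrt[OF B]], of v y]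
      psd_square_root_on_eigenvector[OF psd_psd_sqrt[OF B] psd_sqrt_mult_self[OF B] eig[OF that]]
    unfolding S_def by simp
  have "(norm t)\<^sup>2 = (\<Sum>v\<in>E. (v \<bullet> t)\<^sup>2)"
    unfolding power2_norm_eq_inner using orthonormal_basis_inner[OF orth unit span, of t t]
    by (simp add: power2_eq_square)
  then have "sigma_min_nz B * (norm t)\<^sup>2 = (\<Sum>v\<in>E. sigma_min_nz B * (v \<bullet> t)\<^sup>2)"
    by (simp add: sum_distrib_left)
  also have "\<dots> \<le> (\<Sum>v\<in>E. ev v * (v \<bullet> t)\<^sup>2)"
  proof (rule sum_mono)
    fix v assume v: "v \<in> E"
    show "sigma_min_nz B * (v \<bullet> t)\<^sup>2 \<le> ev v * (v \<bullet> t)\<^sup>2"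
    proof (cases "ev v = 0")
      case True
      then show ?thesis using S_coord[OF v, of z] z by simp
    next
      case False
      then show ?thesis
        using sigma_min_nz_le_eigenvalue[OF B eig[OF v] v0[OF v]] by (simp add: mult_right_mono)
    qed
  qed
  also have "\<dots> = (norm (S *v t))\<^sup>2"
    unfolding power2_norm_eq_inner
    using orthonormal_basis_inner[OF orth unit span, of "S *v t" "S *v t"]
      psd_eigenvalue_nonneg[OF B eig v0]
    by (simp add: S_coord power2_eq_square mult_ac)
  finally show ?thesis unfolding S_def .
qed

lemma column_matrix_matrix_mult: "column j (M ** X) = M *v column j X"
  by (simp add: column_def vec_eq_iff matrix_matrix_mult_def matrix_vector_mult_def)

lemma inner_sum_columns: "(X::real^'d^'n) \<bullet> Y = (\<Sum>j\<in>UNIV. column j X \<bullet> column j Y)"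
  unfolding inner_vec_def column_def by (simp add: sum.swap[of _ "UNIV::'n set"])

lemma norm_power2_sum_columns: "(norm (X::real^'d^'n))\<^sup>2 = (\<Sum>j\<in>UNIV. (norm (column j X))\<^sup>2)"
  by (simp add: power2_norm_eq_inner inner_sum_columns)

lemma norm_power2_sum_rows: "(norm (X::real^'d^'n))\<^sup>2 = (\<Sum>i\<in>UNIV. (norm (X $ i))\<^sup>2)"
  by (simp add: power2_norm_eq_inner inner_vec_def)

lemma matrix_diff_ldistrib: "(A::real^'n^'m) ** (B - C) = A ** B - A ** C"
  by (metis add_diff_cancel diff_add_cancel matrix_add_ldistrib)

lemma symmetric_matrix_mult_inner:
  fixes M :: "real^'n^'n" and X Y :: "real^'d^'n"
  assumes "transpose M = M"
  shows "X \<bullet> (M ** Y) = (M ** X) \<bullet> Y"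
  by (simp add: inner_sum_columns column_matrix_matrix_mult symmetric_matrix_inner[OF assms])

lemma proxR_nonexpansive:
  fixes X Y :: "real^'d^'n"
  assumes "proper_closed_convex r" "0 < \<alpha>"
  shows "norm (proxR \<alpha> r X - proxR \<alpha> r Y) \<le> norm (X - Y)"
proof -
  have "(norm ((proxR \<alpha> r X - proxR \<alpha> r Y) $ i))\<^sup>2 \<le> (norm ((X - Y) $ i))\<^sup>2" for i
    using prox_nonexpansive[OF assms, of "X $ i" "Y $ i"] by (simp add: proxR_def power_mono)
  then have "(norm (proxR \<alpha> r X - proxR \<alpha> r Y))\<^sup>2 \<le> (norm (X - Y))\<^sup>2"
    unfolding norm_power2_sum_rows by (rule sum_mono)
  then show ?thesis by (rule power2_le_imp_le) simp
qed

lemma mixing_contraction: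
  fixes A B S :: "real^'n^'n" and X :: "real^'d^'n"
  assumes A: "transpose A = A" and IAB: "psd (mat 1 - A ** A - B)"
    and S: "transpose S = S" "S ** S = B"
  shows "(norm (A ** X))\<^sup>2 + (norm (S ** X))\<^sup>2 \<le> (norm X)\<^sup>2"
proof -
  have "(norm (A *v y))\<^sup>2 + (norm (S *v y))\<^sup>2 \<le> (norm y)\<^sup>2" for y :: "real^'n"
  proof -
    have "0 \<le> y \<bullet> ((mat 1 - A ** A - B) *v y)" by (rule psd_nonneg[OF IAB])
    also have "\<dots> = y \<bullet> y - y \<bullet> (A *v (A *v y)) - y \<bullet> (S *v (S *v y))"
      using S(2)
      by (simp add: matrix_vector_mult_diff_rdistrib matrix_vector_mul_assoc inner_diff_right)
    also have "\<dots> = (norm y)\<^sup>2 - (norm (A *v y))\<^sup>2 - (norm (S *v y))\<^sup>2"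
      by (simp add: symmetric_matrix_inner[OF A] symmetric_matrix_inner[OF S(1)]
          power2_norm_eq_inner)
    finally show ?thesis by simp
  qed
  then show ?thesis
    unfolding norm_power2_sum_columns column_matrix_matrix_mult sum.distrib[symmetric]
    by (intro sum_mono)
qed

lemma sigma_min_nz_le_psd_sqrt_stacked:
  fixes B :: "real^'n^'n" and D :: "real^'d^'n"
  assumes B: "psd B" and D: "D \<in> range ((**) (psd_sqrt B))"
  shows "sigma_min_nz B * (norm D)\<^sup>2 \<le> (norm (psd_sqrt B ** D))\<^sup>2"
proof -
  obtain Z where Z: "D = psd_sqrt B ** Z" using D by blast
  show ?thesis
    unfolding norm_power2_sum_columns sum_distrib_left column_matrix_matrix_mult
    by (intro sum_mono sigma_min_nz_le_psd_sqrt[OF B]) (simp add: Z column_matrix_matrix_mult)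
qed

lemma psd_sqrt_mult_eq_0_imp_fixed:
  fixes A B :: "real^'n^'n" and Y :: "real^'d^'n"
  assumes B: "psd B" and B_null: "{v. B *v v = 0} = span {ones}" and A_one: "A *v ones = ones"
    and Y: "psd_sqrt B ** Y = 0"
  shows "A ** Y = Y"
proof -
  have "column j (A ** Y) = column j Y" for j
  proof -
    have "psd_sqrt B *v column j Y = column j (psd_sqrt B ** Y)"
      by (simp add: column_matrix_matrix_mult)
    also have "\<dots> = 0" using Y by (simp add: column_def vec_eq_iff)
    finally have "psd_sqrt B *v column j Y = 0" .
    then have "B *v column j Y = 0"
      by (metis psd_sqrt_mult_self[OF B] matrix_vector_mul_assoc matrix_vector_mult_0_right)
    then obtain k where "column j Y = k *\<^sub>R ones"
      using B_null by (auto simp: span_singleton)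
    then show ?thesis by (simp add: column_matrix_matrix_mult matrix_vector_mult_scaleR A_one)
  qed
  then show ?thesis by (simp add: column_def vec_eq_iff)
qed

section \<open>One step of the iteration\<close>

definition flex_lyapunov ::
  "real \<Rightarrow> real^'d^'n \<Rightarrow> real^'d^'n \<Rightarrow> (real^'d^'n) \<times> (real^'d^'n) \<Rightarrow> real" where
  "flex_lyapunov p xs us xu = (norm (fst xu - xs))\<^sup>2 + (1 / p\<^sup>2) * (norm (snd xu - us))\<^sup>2"

text \<open>ws - sqrt B us is annihilated by sqrt B, hence fixed by A, so xs is also the prox of
  ws - sqrt B us itself; this lets the idle branch be compared with xs.\<close>
lemma flex_step_lyapunov_bounds:
  fixes A B :: "real^'n^'n" and x u xs ws us :: "real^'d^'n" and g :: "'n \<Rightarrow> real^'d \<Rightarrow> real^'d"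
  assumes r: "proper_closed_convex r" and \<alpha>: "0 < \<alpha>" and B_psd: "psd B"
    and B_null: "{v. B *v v = 0} = span {ones}" and A_one: "A *v ones = ones"
    and fix_x: "xs = proxR \<alpha> r (A ** (ws - psd_sqrt B ** us))"
    and fix_u: "0 = psd_sqrt B ** (ws - psd_sqrt B ** us)"
  defines "e \<equiv> x - \<alpha> *\<^sub>R gradF g x - ws - psd_sqrt B ** (u - us)"
  shows "flex_lyapunov p xs us (flex_step \<alpha> p A B g r True (x, u))
           \<le> (norm (A ** e))\<^sup>2 + (1 / p\<^sup>2) * (norm (u - us + p *\<^sub>R (psd_sqrt B ** e)))\<^sup>2"
    and "flex_lyapunov p xs us (flex_step \<alpha> p A B g r False (x, u))
           \<le> (norm e)\<^sup>2 + (1 / p\<^sup>2) * (norm (u - us))\<^sup>2"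
proof -
  define S where "S = psd_sqrt B"
  define y where "y = x - \<alpha> *\<^sub>R gradF g x - S ** u"
  define ys where "ys = ws - S ** us"
  have S_ys: "S ** ys = 0" using fix_u unfolding ys_def S_def by simp
  have A_ys: "A ** ys = ys"
    using psd_sqrt_mult_eq_0_imp_fixed[OF B_psd B_null A_one] S_ys unfolding S_def by blast
  have xs_A: "xs = proxR \<alpha> r (A ** ys)" using fix_x unfolding ys_def S_def .
  have e_eq: "e = y - ys" unfolding e_def y_def ys_def S_def by (simp add: matrix_diff_ldistrib)
  have "norm (proxR \<alpha> r (A ** y) - xs) \<le> norm (A ** e)"
    using proxR_nonexpansive[OF r \<alpha>, of "A ** y" "A ** ys"]
    unfolding xs_A e_eq by (simp add: matrix_diff_ldistrib)
  moreover have "flex_step \<alpha> p A B g r True (x, u) = (proxR \<alpha> r (A ** y), u + p *\<^sub>R (S ** e))"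
    unfolding flex_step_def Let_def S_def y_def e_eq
    by (simp add: matrix_diff_ldistrib S_ys[unfolded S_def])
  ultimately show "flex_lyapunov p xs us (flex_step \<alpha> p A B g r True (x, u))
      \<le> (norm (A ** e))\<^sup>2 + (1 / p\<^sup>2) * (norm (u - us + p *\<^sub>R (psd_sqrt B ** e)))\<^sup>2"
    unfolding flex_lyapunov_def S_def by (simp add: power_mono algebra_simps)
  have "norm (proxR \<alpha> r y - xs) \<le> norm e"
    using proxR_nonexpansive[OF r \<alpha>, of y ys] A_ys unfolding xs_A e_eq by simp
  moreover have "flex_step \<alpha> p A B g r False (x, u) = (proxR \<alpha> r y, u)"
    unfolding flex_step_def Let_def S_def y_def by simp
  ultimately show "flex_lyapunov p xs us (flex_step \<alpha> p A B g r False (x, u))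
      \<le> (norm e)\<^sup>2 + (1 / p\<^sup>2) * (norm (u - us))\<^sup>2"
    unfolding flex_lyapunov_def by (simp add: power_mono)
qed

lemma flex_step_expected_descent:
  fixes A B :: "real^'n^'n" and x u xs ws us :: "real^'d^'n"
  assumes r: "proper_closed_convex r" and \<alpha>: "0 < \<alpha>" and p: "0 < p" "p \<le> 1"
    and A_sym: "transpose A = A" and IAB: "psd (mat 1 - A ** A - B)" and B_psd: "psd B"
    and B_null: "{v. B *v v = 0} = span {ones}" and A_one: "A *v ones = ones"
    and fix_x: "xs = proxR \<alpha> r (A ** (ws - psd_sqrt B ** us))"
    and fix_u: "0 = psd_sqrt B ** (ws - psd_sqrt B ** us)"
    and u_range: "u \<in> range ((**) (psd_sqrt B))" and us_range: "us \<in> range ((**) (psd_sqrt B))"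
  shows "p * flex_lyapunov p xs us (flex_step \<alpha> p A B g r True (x, u))
           + (1 - p) * flex_lyapunov p xs us (flex_step \<alpha> p A B g r False (x, u))
         \<le> (norm (x - \<alpha> *\<^sub>R gradF g x - ws))\<^sup>2
           + (1 - p\<^sup>2 * sigma_min_nz B) * (1 / p\<^sup>2) * (norm (u - us))\<^sup>2"
proof -
  define S where "S = psd_sqrt B"
  have S_sym: "transpose S = S" and SS: "S ** S = B"
    unfolding S_def using psd_symmetric psd_psd_sqrt psd_sqrt_mult_self B_psd by blast+
  define v where "v = x - \<alpha> *\<^sub>R gradF g x - ws"
  define d where "d = u - us"
  define e where "e = v - S ** d"
  obtain Z Zs where "u = S ** Z" "us = S ** Zs" using u_range us_range unfolding S_def by blast
  then have d_range: "d \<in> range ((**) (psd_sqrt B))"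
    unfolding d_def S_def by (simp add: matrix_diff_ldistrib[symmetric])
  note bounds = flex_step_lyapunov_bounds[OF r \<alpha> B_psd B_null A_one fix_x fix_u,
      where g = g and x = x and u = u and p = p, folded S_def v_def d_def, folded e_def]
  have "(1 / p\<^sup>2) * (norm (d + p *\<^sub>R (S ** e)))\<^sup>2
      = (1 / p\<^sup>2) * (norm d)\<^sup>2 + (2 / p) * (d \<bullet> (S ** e)) + (norm (S ** e))\<^sup>2"
    using p unfolding power2_norm_eq_inner
    by (simp add: inner_add_left inner_add_right inner_commute field_simps power2_eq_square)
  then have "p * flex_lyapunov p xs us (flex_step \<alpha> p A B g r True (x, u))
      \<le> p * ((norm (A ** e))\<^sup>2 + (norm (S ** e))\<^sup>2) + 2 * (d \<bullet> (S ** e)) + p * ((1 / p\<^sup>2) * (norm d)\<^sup>2)"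
    using mult_left_mono[OF bounds(1), of p] p by (simp add: algebra_simps)
  also have "\<dots> \<le> p * (norm e)\<^sup>2 + 2 * (d \<bullet> (S ** e)) + p * ((1 / p\<^sup>2) * (norm d)\<^sup>2)"
    using mixing_contraction[OF A_sym IAB S_sym SS, of e] p by simp
  finally have average: "p * flex_lyapunov p xs us (flex_step \<alpha> p A B g r True (x, u))
           + (1 - p) * flex_lyapunov p xs us (flex_step \<alpha> p A B g r False (x, u))
         \<le> p * (norm e)\<^sup>2 + 2 * (d \<bullet> (S ** e)) + p * ((1 / p\<^sup>2) * (norm d)\<^sup>2)
           + (1 - p) * ((norm e)\<^sup>2 + (1 / p\<^sup>2) * (norm d)\<^sup>2)"
    using mult_left_mono[OF bounds(2), of "1 - p"] p by simp
  have "d \<bullet> (S ** e) = (S ** d) \<bullet> e" by (rule symmetric_matrix_mult_inner[OF S_sym])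
  then have "(norm e)\<^sup>2 + 2 * (d \<bullet> (S ** e)) = (norm v)\<^sup>2 - (norm (S ** d))\<^sup>2"
    unfolding e_def power2_norm_eq_inner
    by (simp add: inner_diff_left inner_diff_right inner_commute)
  moreover have "sigma_min_nz B * (norm d)\<^sup>2 \<le> (norm (S ** d))\<^sup>2"
    using sigma_min_nz_le_psd_sqrt_stacked[OF B_psd d_range] unfolding S_def .
  moreover have "(1 - p\<^sup>2 * sigma_min_nz B) * (1 / p\<^sup>2) * (norm d)\<^sup>2
      = (1 / p\<^sup>2) * (norm d)\<^sup>2 - sigma_min_nz B * (norm d)\<^sup>2"
    using p by (simp add: field_simps)
  moreover have "p * (norm e)\<^sup>2 + p * ((1 / p\<^sup>2) * (norm d)\<^sup>2)
      + (1 - p) * ((norm e)\<^sup>2 + (1 / p\<^sup>2) * (norm d)\<^sup>2)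
      = (norm e)\<^sup>2 + (1 / p\<^sup>2) * (norm d)\<^sup>2"
    using p by (simp add: field_simps)
  ultimately show ?thesis using average unfolding v_def d_def by linarith
qed

section \<open>The coin filtration\<close>

lemma space_coin_filtration [simp]: "space (coin_filtration M \<theta> k) = space M"
  unfolding coin_filtration_def by (rule space_measure_of) auto

lemma sets_coin_filtration:
  "sets (coin_filtration M \<theta> k)
     = sigma_sets (space M) (\<Union>i\<in>{..<k}. {\<theta> i -` A \<inter> space M | A. A \<subseteq> (UNIV :: bool set)})"
  unfolding coin_filtration_def by (rule sets_measure_of) auto

lemma coin_measurable_coin_filtration:
  fixes \<theta> :: "nat \<Rightarrow> 'a \<Rightarrow> bool"
  shows "i < k \<Longrightarrow> \<theta> i \<in> coin_filtration M \<theta> k \<rightarrow>\<^sub>M count_space UNIV"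
  by (rule measurableI) (auto simp: sets_coin_filtration intro: sigma_sets.Basic)

lemma subalgebra_coin_filtration:
  assumes "\<And>i. \<theta> i \<in> M \<rightarrow>\<^sub>M count_space UNIV"
  shows "subalgebra M (coin_filtration M \<theta> k)"
  unfolding subalgebra_def sets_coin_filtration
  using measurable_sets[OF assms] by (auto intro!: sets.sigma_sets_subset)

lemma flex_iter_measurable:
  "k \<le> j \<Longrightarrow> (\<lambda>\<omega>. flex_iter \<alpha> p A B g r x0 (\<lambda>i. \<theta> i \<omega>) k) \<in> coin_filtration M \<theta> j \<rightarrow>\<^sub>M count_space UNIV"
proof (induction k)
  case (Suc k)
  have step: "(\<lambda>\<omega>. flex_step \<alpha> p A B g r b (flex_iter \<alpha> p A B g r x0 (\<lambda>i. \<theta> i \<omega>) k))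
      \<in> coin_filtration M \<theta> j \<rightarrow>\<^sub>M count_space UNIV" for b
    using Suc by (intro measurable_compose[OF _ measurable_count_space]) simp
  show ?case
    using measurable_compose_countable[OF step coin_measurable_coin_filtration[of k j]] Suc.prems
    by simp
qed simp

lemma flex_iter_cong:
  "(\<And>i. i < k \<Longrightarrow> th i = th' i) \<Longrightarrow> flex_iter \<alpha> p A B g r x0 th k = flex_iter \<alpha> p A B g r x0 th' k"
  by (induction k) auto

lemma finite_range_flex_iter: "finite (range (\<lambda>th. flex_iter \<alpha> p A B g r x0 th k))"
proof -
  have "flex_iter \<alpha> p A B g r x0 th k \<in> (\<lambda>S. flex_iter \<alpha> p A B g r x0 (\<lambda>i. i \<in> S) k) ` Pow {..<k}"
    for th
  proof
    show "flex_iter \<alpha> p A B g r x0 th k = flex_iter \<alpha> p A B g r x0 (\<lambda>i. i \<in> {i. i < k \<and> th i}) k"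
      by (rule flex_iter_cong) simp
  qed auto
  then have "range (\<lambda>th. flex_iter \<alpha> p A B g r x0 th k)
      \<subseteq> (\<lambda>S. flex_iter \<alpha> p A B g r x0 (\<lambda>i. i \<in> S) k) ` Pow {..<k}"
    by blast
  then show ?thesis by (rule finite_subset) simp
qed

lemma flex_iter_snd_in_range:
  "snd (flex_iter \<alpha> p A B g r x0 th k) \<in> range ((**) (psd_sqrt B))"
proof (induction k)
  case 0
  have "snd (flex_iter \<alpha> p A B g r x0 th 0) = psd_sqrt B ** 0" by simp
  then show ?case by blast
next
  case (Suc k)
  then obtain Z where Z: "snd (flex_iter \<alpha> p A B g r x0 th k) = psd_sqrt B ** Z" by blast
  define xu where "xu = flex_iter \<alpha> p A B g r x0 th k"
  define y where "y = fst xu - \<alpha> *\<^sub>R gradF g (fst xu) - psd_sqrt B ** snd xu"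
  have "snd (flex_iter \<alpha> p A B g r x0 th (Suc k))
      = psd_sqrt B ** (Z + (if th k then p else 0) *\<^sub>R y)"
    using Z unfolding xu_def y_def
    by (simp add: flex_step_def Let_def matrix_add_ldistrib matrix_scalar_ac scalar_matrix_assoc)
  then show ?case by blast
qed

text \<open>The coins before k and the coin k depend on disjoint index sets of an independent family.\<close>
lemma (in prob_space) indep_var_coin_filtration:
  fixes \<theta> :: "nat \<Rightarrow> 'a \<Rightarrow> bool" and Y :: "'a \<Rightarrow> real" and f :: "bool \<Rightarrow> real"
  assumes indep: "indep_vars (\<lambda>_. count_space UNIV) \<theta> UNIV"
    and Y: "Y \<in> borel_measurable (coin_filtration M \<theta> k)"
  shows "indep_var borel Y borel (\<lambda>\<omega>. f (\<theta> k \<omega>))"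
proof -
  define E where "E i = {\<theta> i -` A \<inter> space M | A. A \<in> sets (count_space (UNIV :: bool set))}" for i
  have rv: "\<And>i. \<theta> i \<in> M \<rightarrow>\<^sub>M count_space UNIV" and "indep_sets E UNIV"
    using indep unfolding indep_vars_def2 E_def by auto
  define I where "I b = (if b then {..<k} else {k})" for b
  have indep_blocks: "indep_sets (\<lambda>b. sigma_sets (space M) (\<Union>i\<in>I b. E i)) UNIV"
  proof (rule indep_sets_collect_sigma)
    show "indep_sets E (\<Union>b\<in>UNIV. I b)"
      by (rule indep_sets_mono_index[OF _ \<open>indep_sets E UNIV\<close>]) simp
    show "Int_stable (E i)" for i
      unfolding Int_stable_def E_def
    proof clarify
      fix A B :: "bool set"
      show "\<exists>C. (\<theta> i -` A \<inter> space M) \<inter> (\<theta> i -` B \<inter> space M) = \<theta> i -` C \<inter> space M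
          \<and> C \<in> sets (count_space UNIV)"
        by (intro exI[of _ "A \<inter> B"]) auto
    qed
    show "disjoint_family_on I UNIV" unfolding disjoint_family_on_def I_def by auto
  qed
  have Y_sets: "Y -` A \<inter> space M \<in> sigma_sets (space M) (\<Union>i\<in>I True. E i)"
    if "A \<in> sets borel" for A
    using measurable_sets[OF Y that] by (simp add: sets_coin_filtration I_def E_def)
  have coin_sets: "(\<lambda>\<omega>. f (\<theta> k \<omega>)) -` A \<inter> space M \<in> sigma_sets (space M) (\<Union>i\<in>I False. E i)"
    for A
  proof (rule sigma_sets.Basic)
    have "(\<lambda>\<omega>. f (\<theta> k \<omega>)) -` A \<inter> space M = \<theta> k -` (f -` A) \<inter> space M" by auto
    then show "(\<lambda>\<omega>. f (\<theta> k \<omega>)) -` A \<inter> space M \<in> (\<Union>i\<in>I False. E i)"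
      unfolding I_def E_def by auto
  qed
  have "indep_sets (\<lambda>b. {case_bool Y (\<lambda>\<omega>. f (\<theta> k \<omega>)) b -` A \<inter> space M | A.
      A \<in> sets (case_bool borel borel b)}) UNIV"
  proof (rule indep_sets_mono_sets[OF indep_blocks])
    fix b :: bool
    show "{case_bool Y (\<lambda>\<omega>. f (\<theta> k \<omega>)) b -` A \<inter> space M | A. A \<in> sets (case_bool borel borel b)}
        \<subseteq> sigma_sets (space M) (\<Union>i\<in>I b. E i)"
      using Y_sets coin_sets by (cases b) auto
  qed
  moreover have "Y \<in> borel_measurable M"
    using measurable_from_subalg[OF subalgebra_coin_filtration[OF rv] Y] .
  moreover have "(\<lambda>\<omega>. f (\<theta> k \<omega>)) \<in> borel_measurable M"
    using rv by (simp add: measurable_compose[OF _ measurable_count_space])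
  ultimately show ?thesis
    unfolding indep_var_def indep_vars_def2 by (auto split: bool.split)
qed

lemma (in prob_space) integral_mult_coin:
  fixes \<theta> :: "nat \<Rightarrow> 'a \<Rightarrow> bool" and Y :: "'a \<Rightarrow> real"
  assumes indep: "indep_vars (\<lambda>_. count_space UNIV) \<theta> UNIV"
    and coin: "prob {\<omega> \<in> space M. \<theta> k \<omega>} = p"
    and Y: "Y \<in> borel_measurable (coin_filtration M \<theta> k)" "integrable M Y"
  shows "(\<integral>\<omega>. Y \<omega> * of_bool (\<theta> k \<omega>) \<partial>M) = p * expectation Y"
proof -
  have rv: "\<theta> k \<in> M \<rightarrow>\<^sub>M count_space UNIV" using indep unfolding indep_vars_def2 by auto
  note indep_var_coin_filtration[OF indep Y(1), of of_bool]
  moreover have "integrable M (\<lambda>\<omega>. of_bool (\<theta> k \<omega>) :: real)"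
    using rv by (intro integrable_const_bound[where B = 1]) auto
  ultimately have "(\<integral>\<omega>. Y \<omega> * of_bool (\<theta> k \<omega>) \<partial>M)
      = expectation Y * expectation (\<lambda>\<omega>. of_bool (\<theta> k \<omega>))"
    using Y(2) by (intro indep_var_lebesgue_integral)
  also have "expectation (\<lambda>\<omega>. of_bool (\<theta> k \<omega>)) = expectation (indicator {\<omega> \<in> space M. \<theta> k \<omega>})"
    by (rule Bochner_Integration.integral_cong) auto
  also have "\<dots> = p" using coin rv by (simp add: measurable_sets)
  finally show ?thesis by simp
qed

lemma (in prob_space) real_cond_exp_coin:
  fixes \<theta> :: "nat \<Rightarrow> 'a \<Rightarrow> bool" and GT GF :: "'a \<Rightarrow> real"
  assumes indep: "indep_vars (\<lambda>_. count_space UNIV) \<theta> UNIV"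
    and coin: "prob {\<omega> \<in> space M. \<theta> k \<omega>} = p"
    and GT: "GT \<in> borel_measurable (coin_filtration M \<theta> k)" "integrable M GT"
    and GF: "GF \<in> borel_measurable (coin_filtration M \<theta> k)" "integrable M GF"
  shows "AE \<omega> in M. real_cond_exp M (coin_filtration M \<theta> k) (\<lambda>\<omega>. if \<theta> k \<omega> then GT \<omega> else GF \<omega>) \<omega>
    = p * GT \<omega> + (1 - p) * GF \<omega>"
proof -
  define F where "F = coin_filtration M \<theta> k"
  have rv: "\<And>i. \<theta> i \<in> M \<rightarrow>\<^sub>M count_space UNIV" using indep unfolding indep_vars_def2 by auto
  have sub: "subalgebra M F" unfolding F_def by (rule subalgebra_coin_filtration[OF rv])
  have "sigma_finite_subalgebra M F"
    by (intro finite_measure_subalgebra_is_sigma_finite)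
      (simp add: finite_measure_subalgebra_def finite_measure_subalgebra_axioms_def sub
        finite_measure_axioms)
  have mult_coin: "integrable M (\<lambda>\<omega>. Y \<omega> * of_bool (\<theta> k \<omega>))"
    if "integrable M Y" for Y :: "'a \<Rightarrow> real"
    using that rv by (intro Bochner_Integration.integrable_bound[OF that]) auto
  define h where "h \<omega> = GT \<omega> * of_bool (\<theta> k \<omega>) + GF \<omega> - GF \<omega> * of_bool (\<theta> k \<omega>)" for \<omega>
  have "(\<lambda>\<omega>. if \<theta> k \<omega> then GT \<omega> else GF \<omega>) = h" by (simp add: h_def fun_eq_iff)
  moreover have "(\<integral>\<omega>\<in>S. h \<omega> \<partial>M) = (\<integral>\<omega>\<in>S. p * GT \<omega> + (1 - p) * GF \<omega> \<partial>M)" if S: "S \<in> sets F" for S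
  proof -
    have "S \<in> events" using S sub by (auto simp: subalgebra_def)
    then have int: "integrable M (\<lambda>\<omega>. indicator S \<omega> * GT \<omega>)"
        "integrable M (\<lambda>\<omega>. indicator S \<omega> * GF \<omega>)"
      using GT(2) GF(2) integrable_real_mult_indicator by (auto simp: mult.commute)
    have meas: "(\<lambda>\<omega>. indicator S \<omega> * GT \<omega>) \<in> borel_measurable F"
        "(\<lambda>\<omega>. indicator S \<omega> * GF \<omega>) \<in> borel_measurable F"
      using S GT(1) GF(1) unfolding F_def by measurable
    have "(\<integral>\<omega>\<in>S. h \<omega> \<partial>M) = (\<integral>\<omega>. indicator S \<omega> * GT \<omega> * of_bool (\<theta> k \<omega>)
        + indicator S \<omega> * GF \<omega> - indicator S \<omega> * GF \<omega> * of_bool (\<theta> k \<omega>) \<partial>M)"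
      unfolding set_lebesgue_integral_def h_def by (simp add: algebra_simps)
    also have "\<dots> = p * (\<integral>\<omega>. indicator S \<omega> * GT \<omega> \<partial>M) + (1 - p) * (\<integral>\<omega>. indicator S \<omega> * GF \<omega> \<partial>M)"
      using int mult_coin[OF int(1)] mult_coin[OF int(2)]
        integral_mult_coin[OF indep coin meas(1)[unfolded F_def] int(1)]
        integral_mult_coin[OF indep coin meas(2)[unfolded F_def] int(2)]
      by (simp add: algebra_simps)
    also have "\<dots> = (\<integral>\<omega>\<in>S. p * GT \<omega> + (1 - p) * GF \<omega> \<partial>M)"
      unfolding set_lebesgue_integral_def using int by (simp add: algebra_simps)
    finally show ?thesis .
  qed
  moreover have "integrable M h" unfolding h_def using GT(2) GF(2) mult_coin by auto
  moreover have "(\<lambda>\<omega>. p * GT \<omega> + (1 - p) * GF \<omega>) \<in> borel_measurable F"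
    using GT(1) GF(1) unfolding F_def by measurable
  ultimately show ?thesis
    using GT(2) GF(2)
      sigma_finite_subalgebra.real_cond_exp_charact[OF \<open>sigma_finite_subalgebra M F\<close>]
    unfolding F_def by auto
qed

lemma flex_iter_fun_measurable:
  fixes \<Phi> :: "(real^'d^'n) \<times> (real^'d^'n) \<Rightarrow> real"
  shows "(\<lambda>\<omega>. \<Phi> (flex_iter \<alpha> p A B g r x0 (\<lambda>i. \<theta> i \<omega>) k))
    \<in> borel_measurable (coin_filtration M \<theta> k)"
  by (rule measurable_compose[OF flex_iter_measurable[OF order_refl]]) simp

lemma (in finite_measure) integrable_finite_range:
  fixes f :: "'a \<Rightarrow> real"
  assumes "finite (range f)" "f \<in> borel_measurable M"
  shows "integrable M f"
  using assms by (intro integrable_const_bound[where B = "Max (abs ` range f)"]) auto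

lemma (in prob_space) flex_iter_fun_integrable:
  fixes \<Phi> :: "(real^'d^'n) \<times> (real^'d^'n) \<Rightarrow> real"
  assumes "\<And>i. \<theta> i \<in> M \<rightarrow>\<^sub>M count_space UNIV"
  shows "integrable M (\<lambda>\<omega>. \<Phi> (flex_iter \<alpha> p A B g r x0 (\<lambda>i. \<theta> i \<omega>) k))"
proof (rule integrable_finite_range)
  have "range (\<lambda>\<omega>. \<Phi> (flex_iter \<alpha> p A B g r x0 (\<lambda>i. \<theta> i \<omega>) k))
      \<subseteq> \<Phi> ` range (\<lambda>th. flex_iter \<alpha> p A B g r x0 th k)"
    by auto
  then show "finite (range (\<lambda>\<omega>. \<Phi> (flex_iter \<alpha> p A B g r x0 (\<lambda>i. \<theta> i \<omega>) k)))"
    by (rule finite_subset) (intro finite_imageI finite_range_flex_iter)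
  show "(\<lambda>\<omega>. \<Phi> (flex_iter \<alpha> p A B g r x0 (\<lambda>i. \<theta> i \<omega>) k)) \<in> borel_measurable M"
    by (rule measurable_from_subalg[OF subalgebra_coin_filtration[OF assms]
          flex_iter_fun_measurable])
qed

lemma (in prob_space) real_cond_exp_flex_iter_Suc:
  fixes \<Phi> :: "(real^'d^'n) \<times> (real^'d^'n) \<Rightarrow> real"
  assumes indep: "indep_vars (\<lambda>_. count_space UNIV) \<theta> UNIV"
    and coin: "prob {\<omega> \<in> space M. \<theta> k \<omega>} = p'"
  shows "AE \<omega> in M. real_cond_exp M (coin_filtration M \<theta> k)
      (\<lambda>\<omega>. \<Phi> (flex_iter \<alpha> p A B g r x0 (\<lambda>i. \<theta> i \<omega>) (Suc k))) \<omega>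
    = p' * \<Phi> (flex_step \<alpha> p A B g r True (flex_iter \<alpha> p A B g r x0 (\<lambda>i. \<theta> i \<omega>) k))
      + (1 - p') * \<Phi> (flex_step \<alpha> p A B g r False (flex_iter \<alpha> p A B g r x0 (\<lambda>i. \<theta> i \<omega>) k))"
proof -
  have rv: "\<And>i. \<theta> i \<in> M \<rightarrow>\<^sub>M count_space UNIV" using indep unfolding indep_vars_def2 by auto
  define V where "V b xu = \<Phi> (flex_step \<alpha> p A B g r b xu)" for b xu
  have "(\<lambda>\<omega>. \<Phi> (flex_iter \<alpha> p A B g r x0 (\<lambda>i. \<theta> i \<omega>) (Suc k)))
      = (\<lambda>\<omega>. if \<theta> k \<omega> then V True (flex_iter \<alpha> p A B g r x0 (\<lambda>i. \<theta> i \<omega>) k)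
             else V False (flex_iter \<alpha> p A B g r x0 (\<lambda>i. \<theta> i \<omega>) k))"
    by (simp add: fun_eq_iff V_def)
  with real_cond_exp_coin[OF indep coin
      flex_iter_fun_measurable[where \<Phi> = "V True"] flex_iter_fun_integrable[OF rv]
      flex_iter_fun_measurable[where \<Phi> = "V False"] flex_iter_fun_integrable[OF rv]]
  show ?thesis unfolding V_def by simp
qed

theorem lemma2:
  fixes f :: "'n::finite \<Rightarrow> real^'d \<Rightarrow> real"
    and g :: "'n \<Rightarrow> real^'d \<Rightarrow> real^'d"
    and r :: "real^'d \<Rightarrow> ereal"
    and \<mu> L \<alpha> p :: real
    and W A B :: "real^'n^'n"
    and M :: "'w measure" and \<theta> :: "nat \<Rightarrow> 'w \<Rightarrow> bool"
    and x0 xs ws us :: "real^'d^'n"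
    and k :: nat
  assumes mu: "0 \<le> \<mu>" and L: "0 < L"
    and grad: "\<And>i. is_gradient (f i) (g i)"
    and sconv: "\<And>i. strongly_convex \<mu> (f i)"
    and smooth: "\<And>i. L_smooth L (g i)"
    and r: "proper_closed_convex r"
    and W: "mixing_matrix W"
    and A_poly: "is_poly_in A W" and B_poly: "is_poly_in B W"
    and A_sym: "transpose A = A" and A_one: "A *v ones = ones"
    and B_psd: "psd B" and B_null: "{v. B *v v = 0} = span {ones}"
    and IAB: "psd (mat 1 - A ** A - B)"
    and alpha: "0 < \<alpha>" and p: "0 < p" "p \<le> 1"
    and M: "prob_space M"
    and indep: "prob_space.indep_vars M (\<lambda>_. count_space UNIV) \<theta> UNIV"
    and bern: "\<And>i. measure M {\<omega> \<in> space M. \<theta> i \<omega>} = p"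
    and fix_w: "ws = xs - \<alpha> *\<^sub>R gradF g xs"
    and fix_x: "xs = proxR \<alpha> r (A ** (ws - psd_sqrt B ** us))"
    and fix_u: "0 = psd_sqrt B ** (ws - psd_sqrt B ** us)"
    and us_range: "us \<in> range (\<lambda>v. psd_sqrt B ** v)"
  shows "AE \<omega> in M.
     real_cond_exp M (coin_filtration M \<theta> k)
       (\<lambda>\<omega>. let xu = flex_iter \<alpha> p A B g r x0 (\<lambda>i. \<theta> i \<omega>) (Suc k)
             in (norm (fst xu - xs))\<^sup>2 + (1 / p\<^sup>2) * (norm (snd xu - us))\<^sup>2) \<omega>
     \<le> (let xu = flex_iter \<alpha> p A B g r x0 (\<lambda>i. \<theta> i \<omega>) k;
             wk = fst xu - \<alpha> *\<^sub>R gradF g (fst xu)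
         in (norm (wk - ws))\<^sup>2
            + (1 - p\<^sup>2 * sigma_min_nz B) * (1 / p\<^sup>2) * (norm (snd xu - us))\<^sup>2)"
proof -
  interpret prob_space M by (rule M)
  from real_cond_exp_flex_iter_Suc[OF indep bern[of k], of "flex_lyapunov p xs us" \<alpha> p A B g r x0]
  show ?thesis
    unfolding flex_lyapunov_def Let_def
  proof eventually_elim
    case (elim \<omega>)
    obtain x u where xu: "flex_iter \<alpha> p A B g r x0 (\<lambda>i. \<theta> i \<omega>) k = (x, u)"
      by (cases rule: prod.exhaust)
    have "u \<in> range ((**) (psd_sqrt B))" using flex_iter_snd_in_range xu by (metis snd_conv)
    from flex_step_expected_descent[OF r alpha p A_sym IAB B_psd B_null A_one fix_x fix_u
        this us_range]
    show ?case using elim unfolding xu flex_lyapunov_def by simp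
  qed
qed

end
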